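(* Let $f\in\mathcal C$. Then for every integer $d\ge1$: (i) $D_f(d)=f(1)+\sum_{\ell\in\mathbb Z}c_f(\ell)\,\varepsilon_\ell(d)$; (ii) if the series $\sum_{\ell\in\mathbb Z}c_f(\ell)$ converges, then $D_f(d)=f(1)+d\sum_{\ell\in\mathbb Z,\ d\mid\ell}c_f(\ell)-\sum_{\ell\in\mathbb Z}c_f(\ell)$.
   Context: $D_f(d)=\sum_{k=1}^d f(k/d)$. For $d\ge1$, $\ell\in\mathbb Z$: $\varepsilon_\ell(d)=d-1$ if $d\mid\ell$ and $-1$ otherwise (every $d$ divides $0$). $\mathcal C$ is the class of functions $g\colon[0,1]\to\mathbb R$ such that for every rational $x\in(0,1)$, $g(x-0)=g(x+0)$ and $\int_0^\delta\frac{|g(x+u)+g(x-u)-2g(x)|}{u}du<\infty$ for some $\delta>0$. Functions are regarded as $1$-periodic and tacitly Lebesgue integrable on $[0,1]$, with Fourier coefficients $c_g(\ell)=\int_0^1g(x)e^{-2\pi i\ell x}dx$. Series over $\mathbb Z$ are limits of symmetric partial sums $\sum_{|\ell|\le N}$; for negative $\ell$, $d\mid\ell$ means $d\mid|\ell|$. *)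

theory Defs
  imports "HOL-Analysis.Analysis"
begin

definition Dsum :: "(real \<Rightarrow> real) \<Rightarrow> nat \<Rightarrow> real" where
  "Dsum f d = (\<Sum>k=1..d. f (real k / real d))"

definition eps :: "int \<Rightarrow> nat \<Rightarrow> real" where
  "eps l d = (if int d dvd l then real d - 1 else -1)"

text \<open>1-periodic extension of a function given on [0,1] (uses values on [0,1)).\<close>
definition per :: "(real \<Rightarrow> real) \<Rightarrow> real \<Rightarrow> real" where
  "per g x = g (frac x)"

definition fourier_coeff :: "(real \<Rightarrow> real) \<Rightarrow> int \<Rightarrow> complex" where
  "fourier_coeff g l =
     integral {0..1} (\<lambda>x. complex_of_real (g x) * exp (- (2 * of_real pi * \<i> * of_int l * of_real x)))"

definition classC :: "(real \<Rightarrow> real) \<Rightarrow> bool" where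
  "classC g \<longleftrightarrow>
     (\<forall>x\<in>\<rat>. 0 < x \<and> x < 1 \<longrightarrow>
        (\<exists>L. (per g \<longlongrightarrow> L) (at_left x) \<and> (per g \<longlongrightarrow> L) (at_right x)) \<and>
        (\<exists>\<delta>>0. (\<lambda>u. \<bar>per g (x + u) + per g (x - u) - 2 * per g x\<bar> / u)
                  absolutely_integrable_on {0..\<delta>}))"

end

theory Submission
  imports Defs
begin

(* The N-th symmetric partial sum of the Fourier series of f at x is the convolution of f with
   the Dirichlet kernel D_N(u) = sin((2N+1) pi u) / sin(pi u). For 0 < x < 1 the difference
   S_N f(x) - f(x) is an integral of h(u) sin((2N+1) pi u), where h(u) is
   (f(x+u) + f(x-u) - 2 f(x)) / sin(pi u) near u = 0 and (f(x +- u) - f(x)) / sin(pi u) away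
   from 0. The Dini condition makes h integrable, so the Riemann-Lebesgue lemma (Bessel's
   inequality for bounded functions, then truncation) gives S_N f(x) -> f(x). Since
   eps_l(d) is the sum of exp(2 pi i l k / d) over 1 <= k <= d - 1, the series of
   c_f(l) eps_l(d) is the sum of the Fourier series of f at the rational points k/d, which
   gives (i); (ii) follows from c eps_l(d) = d c [d | l] - c. *)

section \<open>Dirichlet kernel\<close>

definition dirichlet_kernel :: "nat \<Rightarrow> real \<Rightarrow> real" where
  "dirichlet_kernel N u = 1 + 2 * (\<Sum>l=1..N. cos (2 * pi * real l * u))"

lemma dirichlet_kernel_minus [simp]: "dirichlet_kernel N (- u) = dirichlet_kernel N u"
  by (simp add: dirichlet_kernel_def)

lemma continuous_on_dirichlet_kernel [continuous_intros]:
  assumes "continuous_on S g"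
  shows "continuous_on S (\<lambda>u. dirichlet_kernel N (g u))"
proof -
  have "continuous_on UNIV (dirichlet_kernel N)"
    unfolding dirichlet_kernel_def by (intro continuous_intros)
  then show ?thesis
    using assms by (rule continuous_on_compose2) auto
qed

lemma sin_mult_dirichlet_kernel:
  "sin (pi * u) * dirichlet_kernel N u = sin ((2 * real N + 1) * pi * u)"
proof (induction N)
  case 0
  then show ?case by (simp add: dirichlet_kernel_def)
next
  case (Suc N)
  have "2 * sin (pi * u) * cos (2 * pi * real (Suc N) * u)
      = sin (2 * pi * real (Suc N) * u + pi * u) - sin (2 * pi * real (Suc N) * u - pi * u)"
    by (simp add: sin_add sin_diff)
  also have "\<dots> = sin ((2 * real (Suc N) + 1) * pi * u) - sin ((2 * real N + 1) * pi * u)"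
    by (simp add: algebra_simps)
  finally have "2 * sin (pi * u) * cos (2 * pi * real (Suc N) * u)
      = sin ((2 * real (Suc N) + 1) * pi * u) - sin ((2 * real N + 1) * pi * u)" .
  moreover have "dirichlet_kernel (Suc N) u = dirichlet_kernel N u + 2 * cos (2 * pi * real (Suc N) * u)"
    by (simp add: dirichlet_kernel_def)
  ultimately show ?case
    using Suc by (simp add: algebra_simps)
qed

lemma dirichlet_kernel_eq_sin_ratio:
  "sin (pi * u) \<noteq> 0 \<Longrightarrow> dirichlet_kernel N u = sin ((2 * real N + 1) * pi * u) / sin (pi * u)"
  using sin_mult_dirichlet_kernel[of u N] by (simp add: field_simps)

lemma exp_sum_eq_dirichlet_kernel:
  "(\<Sum>l\<in>{-int N..int N}. exp (2 * of_real pi * \<i> * of_int l * of_real u))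
     = complex_of_real (dirichlet_kernel N u)"
proof (induction N)
  case 0
  then show ?case by (simp add: dirichlet_kernel_def)
next
  case (Suc N)
  define z where "z = complex_of_real (2 * pi * real (Suc N) * u)"
  have "exp (\<i> * z) + exp (- (\<i> * z)) = 2 * cos z"
    by (simp add: cos_exp_eq)
  also have "cos z = complex_of_real (cos (2 * pi * real (Suc N) * u))"
    unfolding z_def by (rule cos_of_real)
  finally have pair: "exp (\<i> * z) + exp (- (\<i> * z)) = complex_of_real (2 * cos (2 * pi * real (Suc N) * u))"
    by simp
  have "{-int (Suc N)..int (Suc N)} = insert (int (Suc N)) (insert (- int (Suc N)) {-int N..int N})"
    by auto
  then show ?case
    using Suc pair by (simp add: z_def dirichlet_kernel_def algebra_simps)
qed

lemma has_integral_cos_linear: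
  fixes a b c e :: real
  assumes "c \<noteq> 0" "a \<le> b"
  shows "((\<lambda>t. cos (c * t + e)) has_integral (sin (c * b + e) - sin (c * a + e)) / c) {a..b}"
proof -
  have "((\<lambda>t. sin (c * t + e) / c) has_vector_derivative cos (c * t + e)) (at t within {a..b})" for t
    using assms(1) unfolding has_real_derivative_iff_has_vector_derivative[symmetric]
    by (auto intro!: derivative_eq_intros)
  from fundamental_theorem_of_calculus[OF assms(2) this] show ?thesis
    by (simp add: diff_divide_distrib)
qed

lemma integral_dirichlet_kernel_shift: "integral {0..1} (\<lambda>t. dirichlet_kernel N (x - t)) = 1"
proof -
  have "((\<lambda>t. cos (2 * pi * real l * (x - t))) has_integral 0) {0..1}" if "l \<ge> 1" for l
  proof -
    have "sin (- 2 * real l * pi * 1 + e) = sin (- 2 * real l * pi * 0 + e)" for e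
      by (simp add: sin_add sin_diff)
    then have "((\<lambda>t. cos (- 2 * real l * pi * t + e)) has_integral 0) {0..1}" for e
      using has_integral_cos_linear[of "- 2 * real l * pi" 0 1 e] that by simp
    from this[of "2 * real l * pi * x"] show ?thesis
      by (simp add: algebra_simps)
  qed
  then have "((\<lambda>t. dirichlet_kernel N (x - t)) has_integral (1 + 2 * (\<Sum>l=1..N. 0))) {0..1}"
    unfolding dirichlet_kernel_def
    by (intro has_integral_add has_integral_mult_right has_integral_sum)
       (auto intro: has_integral_const_real[of 1 0 1, simplified])
  then show ?thesis
    by (simp add: integral_unique)
qed

lemma sin_mult_sin_has_integral:
  assumes "1 \<le> j" "1 \<le> k"
  shows "((\<lambda>u. sin (real j * pi * u) * sin (real k * pi * u)) has_integral (if j = k then 1/2 else 0)) {0..1}"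
proof -
  have cos_int: "((\<lambda>u. cos (of_int m * pi * u)) has_integral (if m = 0 then 1 else 0)) {0..1}" for m :: int
  proof (cases "m = 0")
    case False
    have "sin (of_int m * pi) = 0"
      by (metis mult.commute sin_npi_int)
    with has_integral_cos_linear[of "of_int m * pi" 0 1 0] False show ?thesis
      by simp
  qed (simp add: has_integral_const_real[of 1 0 1, simplified])
  have "(\<lambda>u. sin (real j * pi * u) * sin (real k * pi * u))
      = (\<lambda>u. (cos (of_int (int j - int k) * pi * u) - cos (of_int (int j + int k) * pi * u)) / 2)"
    by (simp add: sin_times_sin algebra_simps)
  moreover have "((\<lambda>u. (cos (of_int (int j - int k) * pi * u) - cos (of_int (int j + int k) * pi * u)) / 2)
      has_integral ((if int j - int k = 0 then 1 else 0) - (if int j + int k = 0 then 1 else 0)) / 2) {0..1}"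
    by (intro has_integral_divide has_integral_diff cos_int)
  ultimately show ?thesis
    using assms by (simp only:) auto
qed

section \<open>Riemann-Lebesgue lemma for sine integrals\<close>

lemma absolutely_integrable_scaleR_continuous:
  fixes f :: "real \<Rightarrow> real" and g :: "real \<Rightarrow> 'a::euclidean_space"
  assumes f: "f absolutely_integrable_on {a..b}" and g: "continuous_on {a..b} g"
  shows "(\<lambda>t. f t *\<^sub>R g t) absolutely_integrable_on {a..b}"
proof -
  have "bilinear (\<lambda>(z::'a) (r::real). r *\<^sub>R z)"
    by (simp add: bilinear_conv_bounded_bilinear bounded_bilinear.flip[OF bounded_bilinear_scaleR])
  moreover have "g \<in> borel_measurable (lebesgue_on {a..b})"
    using g by (simp add: continuous_imp_measurable_on_sets_lebesgue)
  moreover have "bounded (g ` {a..b})"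
    using g by (simp add: compact_imp_bounded compact_continuous_image)
  ultimately show ?thesis
    using absolutely_integrable_bounded_measurable_product[OF _ _ _ _ f] by simp
qed

corollary absolutely_integrable_mult_continuous:
  fixes f g :: "real \<Rightarrow> real"
  assumes "f absolutely_integrable_on {a..b}" "continuous_on {a..b} g"
  shows "(\<lambda>t. f t * g t) absolutely_integrable_on {a..b}"
  using absolutely_integrable_scaleR_continuous[OF assms] by simp

lemma sin_sum_square_has_integral:
  assumes K: "finite K" "0 \<notin> K"
  shows "((\<lambda>u. (\<Sum>k\<in>K. b k * sin (real k * pi * u))\<^sup>2) has_integral (\<Sum>k\<in>K. (b k)\<^sup>2) / 2) {0..1}"
proof -
  define s where "s k u = sin (real k * pi * u)" for k u
  have "((\<lambda>u. b j * b k * (s j u * s k u)) has_integral b j * b k * (if j = k then 1/2 else 0)) {0..1}"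
    if "j \<in> K" "k \<in> K" for j k
    using K that unfolding s_def
    by (intro has_integral_mult_right sin_mult_sin_has_integral) (auto simp: Suc_le_eq intro!: gr0I)
  then have "((\<lambda>u. \<Sum>j\<in>K. \<Sum>k\<in>K. b j * b k * (s j u * s k u))
      has_integral (\<Sum>j\<in>K. \<Sum>k\<in>K. b j * b k * (if j = k then 1/2 else 0))) {0..1}"
    by (intro has_integral_sum K) auto
  moreover have "(\<Sum>k\<in>K. b k * s k u)\<^sup>2 = (\<Sum>j\<in>K. \<Sum>k\<in>K. b j * b k * (s j u * s k u))" for u
    by (simp add: power2_eq_square sum_product algebra_simps)
  moreover have "(\<Sum>j\<in>K. \<Sum>k\<in>K. b j * b k * (if j = k then 1/2 else 0)) = (\<Sum>j\<in>K. (b j)\<^sup>2 / 2)"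
    using K by (simp add: if_distrib power2_eq_square cong: if_cong)
  ultimately show ?thesis
    by (simp add: s_def sum_divide_distrib)
qed

lemma bessel_inequality_sin:
  fixes g :: "real \<Rightarrow> real"
  assumes g: "g \<in> borel_measurable (lebesgue_on {0..1})" "\<And>u. u \<in> {0..1} \<Longrightarrow> \<bar>g u\<bar> \<le> B"
    and K: "finite K" "0 \<notin> K"
  shows "(\<Sum>k\<in>K. (integral {0..1} (\<lambda>u. g u * sin (real k * pi * u)))\<^sup>2)
           \<le> integral {0..1} (\<lambda>u. (g u)\<^sup>2) / 2"
proof -
  define b where "b k = integral {0..1} (\<lambda>u. g u * sin (real k * pi * u))" for k
  define P where "P u = (\<Sum>k\<in>K. b k * sin (real k * pi * u))" for u
  have g_int: "g absolutely_integrable_on {0..1}"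
    by (rule measurable_bounded_by_integrable_imp_absolutely_integrable[OF g(1), where g = "\<lambda>_. B"])
       (use g(2) in auto)
  have "bounded (g ` {0..1})"
    unfolding bounded_iff using g(2) by (intro exI[of _ B]) auto
  then have "(\<lambda>u. g u * g u) absolutely_integrable_on {0..1}"
    using g(1) by (intro absolutely_integrable_bounded_measurable_product_real g_int) auto
  then have gg: "((\<lambda>u. (g u)\<^sup>2) has_integral integral {0..1} (\<lambda>u. (g u)\<^sup>2)) {0..1}"
    by (simp add: power2_eq_square absolutely_integrable_on_def integrable_integral)
  have "((\<lambda>u. g u * sin (real k * pi * u)) has_integral b k) {0..1}" for k
    unfolding b_def
    by (intro integrable_integral set_lebesgue_integral_eq_integral(1)
        absolutely_integrable_mult_continuous g_int continuous_intros)
  then have gP: "((\<lambda>u. g u * P u) has_integral (\<Sum>k\<in>K. (b k)\<^sup>2)) {0..1}"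
    unfolding P_def sum_distrib_left power2_eq_square
    by (intro has_integral_sum K) (auto simp: algebra_simps intro: has_integral_mult_right)
  have PP: "((\<lambda>u. (P u)\<^sup>2) has_integral (\<Sum>k\<in>K. (b k)\<^sup>2) / 2) {0..1}"
    unfolding P_def using K by (rule sin_sum_square_has_integral)
  have "((\<lambda>u. (g u - 2 * P u)\<^sup>2) has_integral
      integral {0..1} (\<lambda>u. (g u)\<^sup>2) - 4 * (\<Sum>k\<in>K. (b k)\<^sup>2) + 4 * ((\<Sum>k\<in>K. (b k)\<^sup>2) / 2)) {0..1}"
    using has_integral_add[OF has_integral_diff[OF gg has_integral_mult_right[OF gP, of 4]]
        has_integral_mult_right[OF PP, of 4]]
    by (simp add: power2_eq_square algebra_simps)
  from has_integral_nonneg[OF this] show ?thesis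
    unfolding b_def by simp
qed

lemma riemann_lebesgue_sin_bounded:
  fixes g :: "real \<Rightarrow> real"
  assumes g: "g \<in> borel_measurable (lebesgue_on {0..1})" "\<And>u. u \<in> {0..1} \<Longrightarrow> \<bar>g u\<bar> \<le> B"
  shows "(\<lambda>k. integral {0..1} (\<lambda>u. g u * sin (real k * pi * u))) \<longlonglongrightarrow> 0"
proof -
  define b where "b k = integral {0..1} (\<lambda>u. g u * sin (real k * pi * u))" for k
  have "(\<Sum>k<n. (b k)\<^sup>2) \<le> integral {0..1} (\<lambda>u. (g u)\<^sup>2) / 2" for n
  proof -
    have "(\<Sum>k<n. (b k)\<^sup>2) = (\<Sum>k\<in>{..<n} - {0}. (b k)\<^sup>2)"
      by (rule sum.mono_neutral_right) (auto simp: b_def)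
    also have "\<dots> \<le> integral {0..1} (\<lambda>u. (g u)\<^sup>2) / 2"
      unfolding b_def by (rule bessel_inequality_sin[OF g]) auto
    finally show ?thesis .
  qed
  then have "summable (\<lambda>k. (b k)\<^sup>2)"
    by (rule summableI_nonneg_bounded[OF zero_le_power2])
  then have "(\<lambda>k. sqrt ((b k)\<^sup>2)) \<longlonglongrightarrow> sqrt 0"
    by (intro tendsto_real_sqrt summable_LIMSEQ_zero)
  then show ?thesis
    unfolding b_def by (simp add: tendsto_rabs_zero_iff)
qed

lemma absolutely_integrable_approx_bounded:
  fixes \<phi> :: "real \<Rightarrow> real"
  assumes \<phi>: "\<phi> absolutely_integrable_on S" and S: "S \<in> sets lebesgue" and e: "e > 0"
  obtains g B where "g \<in> borel_measurable (lebesgue_on S)" "\<And>u. \<bar>g u\<bar> \<le> B"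
    "(\<lambda>u. \<phi> u - g u) absolutely_integrable_on S" "integral S (\<lambda>u. \<bar>\<phi> u - g u\<bar>) < e"
proof -
  define T where "T n u = max (- real n) (min (real n) (\<phi> u))" for n u
  have \<phi>_meas: "\<phi> \<in> borel_measurable (lebesgue_on S)" and \<phi>_abs: "(\<lambda>u. \<bar>\<phi> u\<bar>) integrable_on S"
    using \<phi> S by (simp_all add: absolutely_integrable_measurable_real')
  have T_meas: "T n \<in> borel_measurable (lebesgue_on S)" for n
    unfolding T_def using \<phi>_meas by measurable
  then have T_int: "T n absolutely_integrable_on S" for n
    by (intro measurable_bounded_by_integrable_imp_absolutely_integrable[OF _ S \<phi>_abs])
      (auto simp: T_def)
  have diff_int: "(\<lambda>u. \<phi> u - T n u) absolutely_integrable_on S" for n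
    using set_integral_diff(1)[OF \<phi> T_int] .
  have "(\<lambda>n. \<bar>\<phi> u - T n u\<bar>) \<longlonglongrightarrow> 0" for u
  proof (rule tendsto_eventually)
    obtain m where "\<bar>\<phi> u\<bar> \<le> real m"
      using real_arch_simple by blast
    then show "\<forall>\<^sub>F n in sequentially. \<bar>\<phi> u - T n u\<bar> = 0"
      unfolding eventually_sequentially T_def
      by (intro exI[of _ m] allI impI) (auto dest: of_nat_mono[where 'a = real])
  qed
  with diff_int have "(\<lambda>n. integral S (\<lambda>u. \<bar>\<phi> u - T n u\<bar>)) \<longlonglongrightarrow> integral S (\<lambda>u. 0)"
    by (intro dominated_convergence(2)[OF _ \<phi>_abs]) (auto simp: T_def absolutely_integrable_on_def)
  then have "\<forall>\<^sub>F n in sequentially. integral S (\<lambda>u. \<bar>\<phi> u - T n u\<bar>) < e"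
    using e by (simp add: order_tendstoD(2))
  then obtain n where n: "integral S (\<lambda>u. \<bar>\<phi> u - T n u\<bar>) < e"
    by (metis (lifting) eventually_sequentially order_refl)
  show ?thesis
    by (rule that[of "T n" "real n", OF T_meas _ diff_int n]) (simp add: T_def)
qed

lemma riemann_lebesgue_sin:
  fixes \<phi> :: "real \<Rightarrow> real"
  assumes \<phi>: "\<phi> absolutely_integrable_on {0..1}"
  shows "(\<lambda>k. integral {0..1} (\<lambda>u. \<phi> u * sin (real k * pi * u))) \<longlonglongrightarrow> 0"
proof (rule LIMSEQ_I)
  fix r :: real
  assume "r > 0"
  then have "r / 2 > 0"
    by simp
  obtain g B where g: "g \<in> borel_measurable (lebesgue_on {0..1})" "\<And>u. \<bar>g u\<bar> \<le> B"
    and diff: "(\<lambda>u. \<phi> u - g u) absolutely_integrable_on {0..1}"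
    and small: "integral {0..1} (\<lambda>u. \<bar>\<phi> u - g u\<bar>) < r / 2"
    by (rule absolutely_integrable_approx_bounded[OF \<phi> _ \<open>r / 2 > 0\<close>]) auto
  obtain K where K: "\<And>k. k \<ge> K \<Longrightarrow> \<bar>integral {0..1} (\<lambda>u. g u * sin (real k * pi * u))\<bar> < r / 2"
    using LIMSEQ_D[OF riemann_lebesgue_sin_bounded[OF g] \<open>r / 2 > 0\<close>] by auto
  show "\<exists>K. \<forall>k\<ge>K. norm (integral {0..1} (\<lambda>u. \<phi> u * sin (real k * pi * u)) - 0) < r"
  proof (intro exI allI impI)
    fix k
    assume "k \<ge> K"
    define s where "s u = sin (real k * pi * u)" for u
    have "g absolutely_integrable_on {0..1}"
      using set_integral_diff(1)[OF \<phi> diff] by simp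
    then have g_s: "(\<lambda>u. g u * s u) integrable_on {0..1}"
      and diff_s: "(\<lambda>u. (\<phi> u - g u) * s u) integrable_on {0..1}"
      unfolding s_def using diff
      by (auto intro!: set_lebesgue_integral_eq_integral(1) absolutely_integrable_mult_continuous
          continuous_intros)
    have "integral {0..1} (\<lambda>u. \<phi> u * s u)
        = integral {0..1} (\<lambda>u. g u * s u) + integral {0..1} (\<lambda>u. (\<phi> u - g u) * s u)"
      using integral_add[OF g_s diff_s] by (simp add: algebra_simps)
    moreover have "norm (integral {0..1} (\<lambda>u. (\<phi> u - g u) * s u)) \<le> integral {0..1} (\<lambda>u. \<bar>\<phi> u - g u\<bar>)"
    proof (rule integral_norm_bound_integral[OF diff_s])
      show "(\<lambda>u. \<bar>\<phi> u - g u\<bar>) integrable_on {0..1}"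
        using diff by (simp add: absolutely_integrable_on_def)
      show "norm ((\<phi> u - g u) * s u) \<le> \<bar>\<phi> u - g u\<bar>" for u
        by (simp add: s_def abs_mult mult_left_le)
    qed
    ultimately show "norm (integral {0..1} (\<lambda>u. \<phi> u * sin (real k * pi * u)) - 0) < r"
      using K[OF \<open>k \<ge> K\<close>] small unfolding s_def by simp
  qed
qed

lemma riemann_lebesgue_sin_odd:
  fixes \<phi> :: "real \<Rightarrow> real"
  assumes \<phi>: "\<phi> absolutely_integrable_on {a..b}" and ab: "0 \<le> a" "b \<le> 1"
  shows "(\<lambda>N. integral {a..b} (\<lambda>u. \<phi> u * sin ((2 * real N + 1) * pi * u))) \<longlonglongrightarrow> 0"
proof -
  define \<psi> where "\<psi> u = (if u \<in> {a..b} then \<phi> u else 0)" for u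
  have "\<psi> absolutely_integrable_on UNIV"
    unfolding \<psi>_def by (simp only: absolutely_integrable_restrict_UNIV \<phi>)
  then have "\<psi> absolutely_integrable_on {0..1}"
    by (rule absolutely_integrable_on_subinterval) auto
  then have "(\<lambda>k. integral {0..1} (\<lambda>u. \<psi> u * sin (real k * pi * u))) \<longlonglongrightarrow> 0"
    by (rule riemann_lebesgue_sin)
  moreover have "integral {0..1} (\<lambda>u. \<psi> u * sin (real k * pi * u))
      = integral {a..b} (\<lambda>u. \<phi> u * sin (real k * pi * u))" for k
  proof -
    have "integral {0..1} (\<lambda>u. \<psi> u * sin (real k * pi * u))
        = integral {0..1} (\<lambda>u. if u \<in> {a..b} then \<phi> u * sin (real k * pi * u) else 0)"
      by (rule integral_cong) (simp add: \<psi>_def)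
    also have "\<dots> = integral ({a..b} \<inter> {0..1}) (\<lambda>u. \<phi> u * sin (real k * pi * u))"
      by (rule integral_restrict_Int)
    finally show ?thesis
      using ab by (simp add: Int_absorb2)
  qed
  ultimately have "(\<lambda>k. integral {a..b} (\<lambda>u. \<phi> u * sin (real k * pi * u))) \<longlonglongrightarrow> 0"
    by simp
  from LIMSEQ_subseq_LIMSEQ[OF this, of "\<lambda>N. 2 * N + 1"] show ?thesis
    by (simp add: strict_mono_def o_def add.commute)
qed

section \<open>Dini's test\<close>

lemma absolutely_integrable_shift_real_ivl:
  fixes f :: "real \<Rightarrow> 'b::euclidean_space"
  assumes "f absolutely_integrable_on {a..b}"
  shows "(\<lambda>u. f (c + u)) absolutely_integrable_on {a-c..b-c}"
  using assms integrable_shift_real_ivl[of f a b c] integrable_shift_real_ivl[of "\<lambda>x. norm (f x)" a b c]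
  by (simp add: absolutely_integrable_on_def add.commute)

lemma absolutely_integrable_reflect_shift_real_ivl:
  fixes f :: "real \<Rightarrow> 'b::euclidean_space"
  assumes "f absolutely_integrable_on {a..b}"
  shows "(\<lambda>u. f (c - u)) absolutely_integrable_on {c-b..c-a}"
  using absolutely_integrable_shift_real_ivl[where f = "\<lambda>x. f (- x)" and a = "-b" and b = "-a" and c = "-c"]
    assms by simp

lemma integral_split_at_reflect:
  fixes h :: "real \<Rightarrow> 'b::banach"
  assumes h: "h integrable_on {a..b}" and x: "a \<le> x" "x \<le> b"
  shows "integral {a..b} h = integral {0..x-a} (\<lambda>u. h (x - u)) + integral {0..b-x} (\<lambda>u. h (x + u))"
proof -
  have "integral {-x - (-x)..-a - (-x)} (\<lambda>u. (\<lambda>v. h (- v)) (u + - x)) = integral {-x..-a} (\<lambda>v. h (- v))"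
    by (rule integral_shift_real_ivl)
  then have "integral {0..x-a} (\<lambda>u. h (x - u)) = integral {-x..-a} (\<lambda>v. h (- v))"
    by simp
  also have "\<dots> = integral {a..x} h"
    by simp
  finally have "integral {0..x-a} (\<lambda>u. h (x - u)) = integral {a..x} h" .
  moreover have "integral {0..b-x} (\<lambda>u. h (x + u)) = integral {x..b} h"
    using integral_shift_real_ivl[where a = x and b = b and c = x and f = h] by (simp add: add.commute)
  ultimately show ?thesis
    using Henstock_Kurzweil_Integration.integral_combine[OF x h] by simp
qed

lemma integral_add_split_at:
  fixes F G :: "real \<Rightarrow> 'a::banach"
  assumes F: "F integrable_on {0..a}" and G: "G integrable_on {0..b}" and "0 \<le> c" "c \<le> a" "c \<le> b"
  shows "integral {0..a} F + integral {0..b} G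
    = integral {0..c} (\<lambda>u. F u + G u) + integral {c..a} F + integral {c..b} G"
proof -
  have FG: "integral {0..c} (\<lambda>u. F u + G u) = integral {0..c} F + integral {0..c} G"
    using assms by (intro integral_add integrable_on_subinterval[OF F] integrable_on_subinterval[OF G]) auto
  have "integral {0..c} F + integral {c..a} F = integral {0..a} F"
    using assms by (intro Henstock_Kurzweil_Integration.integral_combine[OF _ _ F])
  moreover have "integral {0..c} G + integral {c..b} G = integral {0..b} G"
    using assms by (intro Henstock_Kurzweil_Integration.integral_combine[OF _ _ G])
  ultimately show ?thesis
    unfolding FG by (metis add.assoc add.commute)
qed

lemma x_mult_cos_le_sin:
  assumes "0 \<le> y" "y \<le> pi"
  shows "y * cos y \<le> sin y"
proof -
  have "sin 0 - 0 * cos 0 \<le> sin y - y * cos y"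
  proof (rule DERIV_nonneg_imp_nondecreasing[OF assms(1)])
    fix u
    assume "0 \<le> u" "u \<le> y"
    then have "0 \<le> u * sin u"
      using assms sin_ge_zero[of u] by simp
    moreover have "((\<lambda>y. sin y - y * cos y) has_real_derivative u * sin u) (at u)"
      by (auto intro!: derivative_eq_intros)
    ultimately show "\<exists>D. ((\<lambda>y. sin y - y * cos y) has_real_derivative D) (at u) \<and> 0 \<le> D"
      by blast
  qed
  then show ?thesis
    by simp
qed

lemma le_sin_pi_mult:
  assumes "0 \<le> u" "u \<le> 1/3"
  shows "u \<le> sin (pi * u)"
proof -
  have "cos (pi / 3) \<le> cos (pi * u)"
    using assms by (intro cos_monotone_0_pi_le) auto
  then have "pi * u * (1 / 2) \<le> pi * u * cos (pi * u)"
    using assms by (intro mult_left_mono) (auto simp: cos_60)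
  moreover have "pi * u * cos (pi * u) \<le> sin (pi * u)"
    using assms by (intro x_mult_cos_le_sin) auto
  moreover have "2 * u \<le> pi * u"
    using pi_gt3 assms(1) by (intro mult_right_mono) auto
  ultimately show ?thesis
    by linarith
qed

lemma dirichlet_integral_tendsto_zero:
  fixes h :: "real \<Rightarrow> real"
  assumes h: "(\<lambda>u. h u / sin (pi * u)) absolutely_integrable_on {a..b}" and ab: "0 \<le> a" "b \<le> 1"
  shows "(\<lambda>N. integral {a..b} (\<lambda>u. h u * dirichlet_kernel N u)) \<longlonglongrightarrow> 0"
proof -
  have "integral {a..b} (\<lambda>u. h u * dirichlet_kernel N u)
      = integral {a..b} (\<lambda>u. h u / sin (pi * u) * sin ((2 * real N + 1) * pi * u))" for N
  proof (rule integral_spike[of "{0, 1}"])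
    fix u
    assume "u \<in> {a..b} - {0, 1}"
    then have "sin (pi * u) \<noteq> 0"
      using ab sin_gt_zero[of "pi * u"] by auto
    then show "h u / sin (pi * u) * sin ((2 * real N + 1) * pi * u) = h u * dirichlet_kernel N u"
      by (simp add: dirichlet_kernel_eq_sin_ratio)
  qed simp
  with riemann_lebesgue_sin_odd[OF h ab] show ?thesis
    by simp
qed

lemma absolutely_integrable_divide_sin_pi:
  fixes h :: "real \<Rightarrow> real"
  assumes h: "h absolutely_integrable_on {a..b}" and ab: "0 < a" "b < 1"
  shows "(\<lambda>u. h u / sin (pi * u)) absolutely_integrable_on {a..b}"
proof -
  have "sin (pi * u) \<noteq> 0" if "u \<in> {a..b}" for u
    using that ab sin_gt_zero[of "pi * u"] by auto
  then have "continuous_on {a..b} (\<lambda>u. 1 / sin (pi * u))"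
    by (intro continuous_intros) auto
  from absolutely_integrable_mult_continuous[OF h this] show ?thesis
    by simp
qed

lemma absolutely_integrable_dini_quotient:
  fixes G :: "real \<Rightarrow> real"
  assumes G: "G \<in> borel_measurable (lebesgue_on {0..\<delta>})"
    and dini: "(\<lambda>u. \<bar>G u\<bar> / u) integrable_on {0..\<delta>}" and "\<delta> \<le> 1/3"
  shows "(\<lambda>u. G u / sin (pi * u)) absolutely_integrable_on {0..\<delta>}"
proof (rule measurable_bounded_by_integrable_imp_absolutely_integrable[OF _ _ dini])
  show "(\<lambda>u. G u / sin (pi * u)) \<in> borel_measurable (lebesgue_on {0..\<delta>})"
    by (intro borel_measurable_divide G continuous_imp_measurable_on_sets_lebesgue continuous_intros) auto
  show "norm (G u / sin (pi * u)) \<le> \<bar>G u\<bar> / u" if "u \<in> {0..\<delta>}" for u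
  proof (cases "u = 0") \<comment> \<open>at \<open>u = 0\<close> both sides are \<open>0\<close>, as division by zero yields zero\<close>
    case False
    with that assms(3) have "0 < u" "u \<le> sin (pi * u)"
      by (auto intro: le_sin_pi_mult)
    then show ?thesis
      by (simp add: abs_div frac_le)
  qed simp
qed simp

lemma absolutely_integrable_one_sided_differences:
  fixes f :: "real \<Rightarrow> real"
  assumes f: "f absolutely_integrable_on {0..1}" and x: "0 \<le> x" "x \<le> 1"
  shows "(\<lambda>u. f (x - u) - f x) absolutely_integrable_on {0..x}"
    and "(\<lambda>u. f (x + u) - f x) absolutely_integrable_on {0..1-x}"
proof -
  have "(\<lambda>u. f (x - u)) absolutely_integrable_on {0..x}"
    using x by (intro absolutely_integrable_on_subinterval[OF absolutely_integrable_reflect_shift_real_ivl[OF f]])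
      auto
  then show "(\<lambda>u. f (x - u) - f x) absolutely_integrable_on {0..x}"
    by (intro set_integral_diff(1)) auto
  have "(\<lambda>u. f (x + u)) absolutely_integrable_on {0..1-x}"
    using x by (intro absolutely_integrable_on_subinterval[OF absolutely_integrable_shift_real_ivl[OF f]])
      auto
  then show "(\<lambda>u. f (x + u) - f x) absolutely_integrable_on {0..1-x}"
    by (intro set_integral_diff(1)) auto
qed

lemma dirichlet_convolution_minus_value:
  fixes f :: "real \<Rightarrow> real"
  assumes f: "f absolutely_integrable_on {0..1}" and x: "0 \<le> x" "x \<le> 1"
  shows "integral {0..1} (\<lambda>t. f t * dirichlet_kernel N (x - t)) - f x
    = integral {0..x} (\<lambda>u. (f (x - u) - f x) * dirichlet_kernel N u)
      + integral {0..1-x} (\<lambda>u. (f (x + u) - f x) * dirichlet_kernel N u)"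
proof -
  define h where "h t = (f t - f x) * dirichlet_kernel N (x - t)" for t
  have f_D: "(\<lambda>t. f t * dirichlet_kernel N (x - t)) integrable_on {0..1}"
    by (intro set_lebesgue_integral_eq_integral(1) absolutely_integrable_mult_continuous f
        continuous_intros)
  have c_D: "(\<lambda>t. f x * dirichlet_kernel N (x - t)) integrable_on {0..1}"
    by (intro integrable_continuous_interval continuous_intros)
  have h_eq: "h = (\<lambda>t. f t * dirichlet_kernel N (x - t) - f x * dirichlet_kernel N (x - t))"
    by (simp add: h_def[abs_def] algebra_simps)
  have "integral {0..1} h = integral {0..1} (\<lambda>t. f t * dirichlet_kernel N (x - t)) - f x"
    using integral_diff[OF f_D c_D] integral_dirichlet_kernel_shift[of N x] by (simp add: h_eq)
  moreover have "integral {0..1} h = integral {0..x} (\<lambda>u. h (x - u)) + integral {0..1-x} (\<lambda>u. h (x + u))"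
    using integral_split_at_reflect[of h 0 1 x] integrable_diff[OF f_D c_D] x
    unfolding h_eq[symmetric] by simp
  ultimately show ?thesis
    by (simp add: h_def)
qed

lemma dirichlet_convolution_tendsto_dini:
  fixes f :: "real \<Rightarrow> real"
  assumes f: "f absolutely_integrable_on {0..1}" and x: "0 < x" "x < 1" and "\<delta> > 0"
    and dini: "(\<lambda>u. \<bar>f (x + u) + f (x - u) - 2 * f x\<bar> / u) integrable_on {0..\<delta>}"
  shows "(\<lambda>N. integral {0..1} (\<lambda>t. f t * dirichlet_kernel N (x - t))) \<longlonglongrightarrow> f x"
proof -
  define \<eta> where "\<eta> = min \<delta> (min (min x (1 - x)) (1/3))"
  have \<eta>: "0 < \<eta>" "\<eta> \<le> \<delta>" "\<eta> \<le> x" "\<eta> \<le> 1 - x" "\<eta> \<le> 1/3"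
    using x \<open>\<delta> > 0\<close> unfolding \<eta>_def by (auto simp: min_def)
  define L where "L u = f (x - u) - f x" for u
  define R where "R u = f (x + u) - f x" for u
  have L_int: "L absolutely_integrable_on {0..x}" and R_int: "R absolutely_integrable_on {0..1-x}"
    unfolding L_def R_def using absolutely_integrable_one_sided_differences[OF f] x by auto
  have L_D: "(\<lambda>u. L u * dirichlet_kernel N u) integrable_on {0..x}"
   and R_D: "(\<lambda>u. R u * dirichlet_kernel N u) integrable_on {0..1-x}" for N
    using L_int R_int
    by (auto intro!: set_lebesgue_integral_eq_integral(1) absolutely_integrable_mult_continuous
        continuous_intros)
  have "integral {0..1} (\<lambda>t. f t * dirichlet_kernel N (x - t)) - f x
      = integral {0..\<eta>} (\<lambda>u. (L u + R u) * dirichlet_kernel N u)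
        + integral {\<eta>..x} (\<lambda>u. L u * dirichlet_kernel N u)
        + integral {\<eta>..1-x} (\<lambda>u. R u * dirichlet_kernel N u)" for N
  proof -
    have "integral {0..1} (\<lambda>t. f t * dirichlet_kernel N (x - t)) - f x
        = integral {0..x} (\<lambda>u. L u * dirichlet_kernel N u) + integral {0..1-x} (\<lambda>u. R u * dirichlet_kernel N u)"
      unfolding L_def R_def using dirichlet_convolution_minus_value[OF f] x by simp
    with integral_add_split_at[OF L_D[of N] R_D[of N], of \<eta>] \<eta> show ?thesis
      by (simp add: distrib_right)
  qed
  moreover have "(\<lambda>N. integral {0..\<eta>} (\<lambda>u. (L u + R u) * dirichlet_kernel N u)) \<longlonglongrightarrow> 0"
  proof (intro dirichlet_integral_tendsto_zero absolutely_integrable_dini_quotient)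
    have "(\<lambda>u. L u + R u) absolutely_integrable_on {0..\<eta>}"
      using \<eta> by (intro set_integral_add(1) absolutely_integrable_on_subinterval[OF L_int]
          absolutely_integrable_on_subinterval[OF R_int]) auto
    then show "(\<lambda>u. L u + R u) \<in> borel_measurable (lebesgue_on {0..\<eta>})"
      by (simp add: absolutely_integrable_measurable_real')
    show "(\<lambda>u. \<bar>L u + R u\<bar> / u) integrable_on {0..\<eta>}"
      using integrable_on_subinterval[OF dini, of 0 \<eta>] \<eta> by (simp add: L_def R_def algebra_simps)
  qed (use \<eta> in auto)
  moreover have "(\<lambda>N. integral {\<eta>..x} (\<lambda>u. L u * dirichlet_kernel N u)) \<longlonglongrightarrow> 0"
    using \<eta> x by (intro dirichlet_integral_tendsto_zero absolutely_integrable_divide_sin_pi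
        absolutely_integrable_on_subinterval[OF L_int]) auto
  moreover have "(\<lambda>N. integral {\<eta>..1-x} (\<lambda>u. R u * dirichlet_kernel N u)) \<longlonglongrightarrow> 0"
    using \<eta> x by (intro dirichlet_integral_tendsto_zero absolutely_integrable_divide_sin_pi
        absolutely_integrable_on_subinterval[OF R_int]) auto
  ultimately have "(\<lambda>N. integral {0..1} (\<lambda>t. f t * dirichlet_kernel N (x - t)) - f x) \<longlonglongrightarrow> 0 + 0 + 0"
    by (simp only:) (intro tendsto_add)
  then show ?thesis
    by (simp add: LIM_zero_iff)
qed

section \<open>Fourier sums at the points k/d\<close>

lemma fourier_partial_sum_eq_dirichlet_convolution:
  fixes f :: "real \<Rightarrow> real"
  assumes f: "f absolutely_integrable_on {0..1}"
  shows "(\<Sum>l\<in>{-int N..int N}. fourier_coeff f l * exp (2 * of_real pi * \<i> * of_int l * of_real x))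
    = complex_of_real (integral {0..1} (\<lambda>t. f t * dirichlet_kernel N (x - t)))"
proof -
  define e where "e l t = exp (2 * of_real pi * \<i> * of_int l * of_real t)" for l t
  have e_int: "(\<lambda>t. f t *\<^sub>R e l (x - t)) integrable_on {0..1}" for l
    unfolding e_def
    by (intro set_lebesgue_integral_eq_integral(1) absolutely_integrable_scaleR_continuous f
        continuous_intros)
  have "fourier_coeff f l * e l x = integral {0..1} (\<lambda>t. f t *\<^sub>R e l (x - t))" for l
  proof -
    have "fourier_coeff f l * e l x
        = integral {0..1} (\<lambda>t. complex_of_real (f t) * exp (- (2 * of_real pi * \<i> * of_int l * of_real t)) * e l x)"
      unfolding fourier_coeff_def by (rule integral_mult_left[symmetric])
    also have "\<dots> = integral {0..1} (\<lambda>t. f t *\<^sub>R e l (x - t))"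
      unfolding e_def scaleR_conv_of_real mult.assoc exp_add[symmetric]
      by (simp add: algebra_simps)
    finally show ?thesis .
  qed
  then have "(\<Sum>l\<in>{-int N..int N}. fourier_coeff f l * e l x)
      = integral {0..1} (\<lambda>t. \<Sum>l\<in>{-int N..int N}. f t *\<^sub>R e l (x - t))"
    by (simp add: integral_sum[OF _ e_int])
  also have "\<dots> = integral {0..1} (\<lambda>t. complex_of_real (f t * dirichlet_kernel N (x - t)))"
    by (simp only: scaleR_sum_right[symmetric] e_def exp_sum_eq_dirichlet_kernel) (simp add: scaleR_conv_of_real)
  also have "\<dots> = complex_of_real (integral {0..1} (\<lambda>t. f t * dirichlet_kernel N (x - t)))"
    using f by (intro integral_unique has_integral_of_real integrable_integral
        set_lebesgue_integral_eq_integral(1) absolutely_integrable_mult_continuous continuous_intros)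
  finally show ?thesis
    unfolding e_def .
qed

lemma sum_roots_of_unity:
  assumes "d \<ge> 1"
  shows "(\<Sum>k<d. exp (2 * of_real pi * \<i> * of_int l * of_real (real k / real d)))
    = (if int d dvd l then of_nat d else 0)"
proof -
  define \<omega> where "\<omega> = exp (2 * of_real pi * \<i> * of_int l / of_nat d)"
  have pow: "exp (2 * of_real pi * \<i> * of_int l * of_real (real k / real d)) = \<omega> ^ k" for k
    unfolding \<omega>_def exp_of_nat_mult[symmetric] by (simp add: field_simps)
  have "\<omega> ^ d = 1"
    using assms unfolding \<omega>_def exp_of_nat_mult[symmetric]
    by (simp add: exp_eq_1 field_simps)
  have "\<omega> = 1 \<longleftrightarrow> int d dvd l"
  proof
    assume "\<omega> = 1"
    then obtain n :: int where "2 * pi * of_int l / real d = of_int (2 * n) * pi"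
      unfolding \<omega>_def exp_eq_1 by (auto simp: Im_divide_of_nat)
    then have "real_of_int l = real d * of_int n"
      using assms by (simp add: field_simps)
    then show "int d dvd l"
      by (metis dvd_triv_left of_int_eq_iff of_int_mult of_int_of_nat_eq)
  next
    assume "int d dvd l"
    then obtain m where "l = int d * m"
      by (elim dvdE)
    then show "\<omega> = 1"
      using assms unfolding \<omega>_def by (simp add: exp_eq_1 field_simps)
  qed
  with \<open>\<omega> ^ d = 1\<close> show ?thesis
    unfolding pow by (auto simp: geometric_sum)
qed

lemma of_real_eps_eq_sum_exp:
  assumes "d \<ge> 1"
  shows "complex_of_real (eps l d) = (\<Sum>k=1..d-1. exp (2 * of_real pi * \<i> * of_int l * of_real (real k / real d)))"
proof -
  define e where "e k = exp (2 * of_real pi * \<i> * of_int l * of_real (real k / real d))" for k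
  have "{..<d} = insert 0 {1..d-1}"
    using assms by auto
  then have "(\<Sum>k<d. e k) = 1 + (\<Sum>k=1..d-1. e k)"
    by (simp add: e_def)
  moreover have "(\<Sum>k<d. e k) = (if int d dvd l then of_nat d else 0)"
    unfolding e_def by (rule sum_roots_of_unity[OF assms])
  ultimately show ?thesis
    using assms unfolding e_def[symmetric] by (auto simp: eps_def of_nat_diff algebra_simps add_eq_0_iff)
qed

lemma sum_mult_eps:
  assumes "finite L"
  shows "(\<Sum>l\<in>L. c l * complex_of_real (eps l d))
    = of_nat d * (\<Sum>l\<in>{l\<in>L. int d dvd l}. c l) - (\<Sum>l\<in>L. c l)"
proof -
  have "(\<Sum>l\<in>L. c l * complex_of_real (eps l d))
      = (\<Sum>l\<in>L. of_nat d * (if int d dvd l then c l else 0) - c l)"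
    by (intro sum.cong) (auto simp: eps_def algebra_simps)
  also have "\<dots> = of_nat d * (\<Sum>l\<in>{l\<in>L. int d dvd l}. c l) - (\<Sum>l\<in>L. c l)"
    using assms by (simp add: sum_subtractf sum_distrib_left sum.inter_filter)
  finally show ?thesis .
qed

lemma classC_imp_dini_condition:
  assumes "classC f" "x \<in> \<rat>" "0 < x" "x < 1"
  obtains \<delta> where "\<delta> > 0" "(\<lambda>u. \<bar>f (x + u) + f (x - u) - 2 * f x\<bar> / u) integrable_on {0..\<delta>}"
proof -
  obtain \<delta>\<^sub>0 where "\<delta>\<^sub>0 > 0"
    and dini: "(\<lambda>u. \<bar>per f (x + u) + per f (x - u) - 2 * per f x\<bar> / u) absolutely_integrable_on {0..\<delta>\<^sub>0}"
    using assms unfolding classC_def by blast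
  define \<delta> where "\<delta> = min \<delta>\<^sub>0 (min x (1 - x) / 2)"
  have \<delta>: "0 < \<delta>" "\<delta> \<le> \<delta>\<^sub>0" "\<delta> < x" "\<delta> < 1 - x"
    using assms(3,4) \<open>\<delta>\<^sub>0 > 0\<close> unfolding \<delta>_def by (auto simp: min_def)
  have per_eq: "per f y = f y" if "0 \<le> y" "y < 1" for y
    using that by (simp add: per_def frac_eq)
  have per_int: "(\<lambda>u. \<bar>per f (x + u) + per f (x - u) - 2 * per f x\<bar> / u) integrable_on {0..\<delta>}"
    using absolutely_integrable_on_subinterval[OF dini, of 0 \<delta>] \<delta>
    by (simp add: absolutely_integrable_on_def)
  have "per f (x + u) + per f (x - u) - 2 * per f x = f (x + u) + f (x - u) - 2 * f x"
    if "u \<in> {0..\<delta>}" for u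
    using that \<delta> assms(3,4) by (simp add: per_eq)
  then show ?thesis
    by (intro that[OF \<open>0 < \<delta>\<close>] integrable_eq[OF per_int]) simp
qed

lemma Dsum_eq_sum_interior:
  assumes "d \<ge> 1"
  shows "Dsum f d = f 1 + (\<Sum>k=1..d-1. f (real k / real d))"
proof -
  have "{1..d} = insert d {1..d-1}"
    using assms by auto
  then show ?thesis
    using assms by (simp add: Dsum_def)
qed

lemma fourier_series_tendsto_at_rational:
  fixes f :: "real \<Rightarrow> real"
  assumes f: "f absolutely_integrable_on {0..1}" and C: "classC f"
    and x: "x \<in> \<rat>" "0 < x" "x < 1"
  shows "(\<lambda>N. \<Sum>l\<in>{-int N..int N}. fourier_coeff f l * exp (2 * of_real pi * \<i> * of_int l * of_real x))
    \<longlonglongrightarrow> complex_of_real (f x)"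
proof -
  obtain \<delta> where "\<delta> > 0" "(\<lambda>u. \<bar>f (x + u) + f (x - u) - 2 * f x\<bar> / u) integrable_on {0..\<delta>}"
    using classC_imp_dini_condition[OF C x] .
  from dirichlet_convolution_tendsto_dini[OF f x(2,3) this] show ?thesis
    unfolding fourier_partial_sum_eq_dirichlet_convolution[OF f] by (rule tendsto_of_real)
qed

lemma fourier_eps_sum_tendsto:
  fixes f :: "real \<Rightarrow> real"
  assumes f: "f absolutely_integrable_on {0..1}" and C: "classC f" and d: "d \<ge> 1"
  shows "(\<lambda>N. \<Sum>l\<in>{-int N..int N}. fourier_coeff f l * complex_of_real (eps l d))
    \<longlonglongrightarrow> complex_of_real (Dsum f d - f 1)"
proof -
  have "(\<lambda>N. \<Sum>k=1..d-1. \<Sum>l\<in>{-int N..int N}.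
      fourier_coeff f l * exp (2 * of_real pi * \<i> * of_int l * of_real (real k / real d)))
    \<longlonglongrightarrow> (\<Sum>k=1..d-1. complex_of_real (f (real k / real d)))"
    using d by (intro tendsto_sum fourier_series_tendsto_at_rational[OF f C]) (auto simp: field_simps)
  then show ?thesis
    unfolding of_real_eps_eq_sum_exp[OF d] sum_distrib_left sum.swap[of _ "{1..d-1}"]
    by (simp add: Dsum_eq_sum_interior[OF d])
qed

theorem proposition3p1:
  fixes f :: "real \<Rightarrow> real" and d :: nat
  assumes integrable: "f absolutely_integrable_on {0..1}"
    and C: "classC f"
    and d: "d \<ge> 1"
  shows "(((\<lambda>N. \<Sum>l\<in>{- int N..int N}. fourier_coeff f l * complex_of_real (eps l d))
            \<longlongrightarrow> complex_of_real (Dsum f d - f 1)) sequentially) \<and>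
         (\<forall>S. ((\<lambda>N. \<Sum>l\<in>{- int N..int N}. fourier_coeff f l) \<longlongrightarrow> S) sequentially \<longrightarrow>
           (\<exists>T. ((\<lambda>N. \<Sum>l\<in>{l\<in>{- int N..int N}. int d dvd l}. fourier_coeff f l) \<longlongrightarrow> T) sequentially
               \<and> complex_of_real (Dsum f d) = complex_of_real (f 1) + of_nat d * T - S))"
proof -
  define A where "A N = (\<Sum>l\<in>{- int N..int N}. fourier_coeff f l * complex_of_real (eps l d))" for N
  define B where "B N = (\<Sum>l\<in>{l\<in>{- int N..int N}. int d dvd l}. fourier_coeff f l)" for N
  define S\<^sub>N where "S\<^sub>N N = (\<Sum>l\<in>{- int N..int N}. fourier_coeff f l)" for N
  have lim_A: "A \<longlonglongrightarrow> complex_of_real (Dsum f d - f 1)"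
    unfolding A_def using integrable C d by (rule fourier_eps_sum_tendsto)
  have B_eq: "B N = (A N + S\<^sub>N N) / of_nat d" for N
    using d unfolding A_def B_def S\<^sub>N_def by (simp add: sum_mult_eps field_simps)
  have "B \<longlonglongrightarrow> (complex_of_real (Dsum f d - f 1) + S) / of_nat d" if "S\<^sub>N \<longlonglongrightarrow> S" for S
    unfolding B_eq using lim_A that d by (auto intro!: tendsto_intros)
  moreover have "complex_of_real (Dsum f d)
      = complex_of_real (f 1) + of_nat d * ((complex_of_real (Dsum f d - f 1) + S) / of_nat d) - S" for S
    using d by simp
  ultimately show ?thesis
    using lim_A unfolding A_def B_def S\<^sub>N_def by blast
qed

end
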